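(* Let $p>3$ be prime, $t\in\{1,3,p,3p\}$, and $1\le r\le 3p-1$ with $\gcd(r,3p)=1$. Then \[\mathcal{S}(1,r,t)=\begin{cases}0 & \text{if } r\equiv1\pmod3,\\ |r|_p-1 & \text{if } r\equiv 2\pmod 3\text{ and } |r|_p\text{ is odd},\\ \frac{|r|_p}{2} & \text{if } r\equiv2\pmod 3\text{ and }|r|_p\text{ is even}.\end{cases}\]
   Context: $|r|_m$ is the multiplicative order of $r$ modulo $m$ (with $|r|_1=1$). $S_k(x):=1+x+\cdots+x^{k-1}$, $S_0:=0$. For $m\ge1$ with $\gcd(r,m)=1$, $\kappa(m,r,t):=\dfrac{m|r|_m}{\gcd(m,\,tS_{|r|_m}(r))}$. For $d\in\{1,3,p,3p\}$, $\Lambda(d,r,t):=\{\ell>0:\ \ell \text{ divides } \frac{|r|_{3p}}{\gcd(\kappa(d,r,t),|r|_{3p})}\text{ and }\gcd(r^{\ell\kappa(d,r,t)}-1,3p)=d\}$, and $\mathcal{S}(d,r,t):=\sum_{\ell\in\Lambda(d,r,t)} d\,\phi\!\left(\frac{|r|_{3p}}{\ell\gcd(\kappa(d,r,t),|r|_{3p})}\right)$, with $\phi$ Euler's function. *)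

theory Defs
  imports "HOL-Number_Theory.Number_Theory"
begin

(* |r|_m is  ord m r  (HOL-Number_Theory.Pocklington); note ord 1 r = 1. *)

definition Sgeom :: "nat \<Rightarrow> nat \<Rightarrow> nat" where
  "Sgeom k x = (\<Sum>i<k. x ^ i)"

definition kappa :: "nat \<Rightarrow> nat \<Rightarrow> nat \<Rightarrow> nat" where
  "kappa m r t = (m * ord m r) div gcd m (t * Sgeom (ord m r) r)"

definition Lam :: "nat \<Rightarrow> nat \<Rightarrow> nat \<Rightarrow> nat \<Rightarrow> nat set" where
  "Lam p d r t = {l. l > 0 \<and>
      l dvd (ord (3*p) r div gcd (kappa d r t) (ord (3*p) r)) \<and>
      gcd (r ^ (l * kappa d r t) - 1) (3*p) = d}"

definition SS :: "nat \<Rightarrow> nat \<Rightarrow> nat \<Rightarrow> nat \<Rightarrow> nat" where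
  "SS p d r t = (\<Sum>l\<in>Lam p d r t. d * totient (ord (3*p) r div (l * gcd (kappa d r t) (ord (3*p) r))))"

end

theory Submission
  imports Defs
begin

(*
  For d = 1 we have kappa = 1, so S(1,r,t) is a sum of totient (n div l) over the divisors l of
  n = |r|_{3p} with r^l - 1 coprime to 3p. Grouping the integers j in (0, n] by gcd j n turns
  this into a count of those j for which neither |r|_3 nor |r|_p divides j, where
  n = lcm |r|_3 |r|_p. If r = 1 mod 3 then |r|_3 = 1 and nothing is counted; otherwise
  |r|_3 = 2 and we count the odd j in (0, lcm 2 |r|_p] that are not multiples of |r|_p.
*)

lemma sum_totient_divisors_filter:
  fixes n :: nat
  assumes "n > 0"
  shows "(\<Sum>d | d dvd n \<and> P d. totient (n div d)) = card {j\<in>{0<..n}. P (gcd j n)}"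
proof -
  define A where "A d = {j\<in>{0<..n}. gcd j n = d}" for d
  have "{j\<in>{0<..n}. P (gcd j n)} = (\<Union>d\<in>{d. d dvd n \<and> P d}. A d)"
    by (auto simp: A_def)
  also have "card \<dots> = (\<Sum>d | d dvd n \<and> P d. card (A d))"
    using assms by (intro card_UN_disjoint) (auto simp: A_def)
  also have "\<dots> = (\<Sum>d | d dvd n \<and> P d. totient (n div d))"
    using assms by (intro sum.cong refl) (auto simp only: A_def mem_Collect_eq card_gcd_eq_totient)
  finally show ?thesis by simp
qed

lemma card_odd_greaterThanAtMost_double: "card {j\<in>{0<..2*m}. odd (j::nat)} = m"
proof -
  have "{j\<in>{0<..2*m}. odd j} = (\<lambda>i. 2*i + 1) ` {..<m}"
    by (auto elim!: oddE)
  then show ?thesis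
    by (simp add: card_image inj_on_def)
qed

lemma card_odd_not_multiple_lcm_2:
  fixes k :: nat
  assumes "k > 0"
  shows "card {j\<in>{0<..lcm 2 k}. odd j \<and> \<not> k dvd j} = (if odd k then k - 1 else k div 2)"
proof (cases "odd k")
  case True
  have "j = k" if "odd j" "j \<in> {0<..2*k}" "k dvd j" for j
  proof -
    obtain c where c: "j = k * c"
      using \<open>k dvd j\<close> by blast
    then have "odd c" "0 < c" "c \<le> 2"
      using that assms by auto
    then have "c = 1"
      by presburger
    then show ?thesis
      using c by simp
  qed
  then have "{j\<in>{0<..lcm 2 k}. odd j \<and> \<not> k dvd j} = {j\<in>{0<..2*k}. odd j} - {k}"
    using True by (auto simp: lcm_nat_def coprime_left_2_iff_odd)
  also have "card \<dots> = card {j\<in>{0<..2*k}. odd j} - 1"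
    using True assms by (intro card_Diff_singleton) auto
  finally show ?thesis
    using True by (simp only: card_odd_greaterThanAtMost_double) simp
next
  case False
  then obtain m where m: "k = 2*m" by blast
  have "{j\<in>{0<..lcm 2 k}. odd j \<and> \<not> k dvd j} = {j\<in>{0<..2*m}. odd j}"
    using m by auto
  then show ?thesis
    using m by (simp only: card_odd_greaterThanAtMost_double) simp
qed

lemma dvd_power_minus_one_iff_ord_dvd:
  fixes r m g :: nat
  assumes "r > 0"
  shows "m dvd r ^ g - 1 \<longleftrightarrow> ord m r dvd g"
proof -
  have "m dvd r ^ g - 1 \<longleftrightarrow> [r ^ g = 1] (mod m)"
    using assms by (simp add: cong_altdef_nat)
  then show ?thesis
    by (simp add: ord_divides')
qed

lemma coprime_prime_right_iff:
  fixes x q :: nat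
  assumes "prime q"
  shows "coprime x q \<longleftrightarrow> \<not> q dvd x"
  using assms prime_imp_coprime[of q x]
  by (metis coprime_commute coprime_common_divisor_nat dvd_refl prime_gt_1_nat less_irrefl)

lemma coprime_power_minus_one_prime_product:
  fixes r q1 q2 g :: nat
  assumes "prime q1" "prime q2" "r > 0"
  shows "coprime (r ^ g - 1) (q1 * q2) \<longleftrightarrow> \<not> ord q1 r dvd g \<and> \<not> ord q2 r dvd g"
  unfolding coprime_mult_right_iff coprime_prime_right_iff[OF assms(1)]
    coprime_prime_right_iff[OF assms(2)] dvd_power_minus_one_iff_ord_dvd[OF assms(3)] ..

lemma ord_3_eq:
  fixes r :: nat
  assumes "coprime 3 r"
  shows "ord 3 r = (if r mod 3 = 1 then 1 else 2)"
proof -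
  have "r mod 3 \<noteq> 0"
    using assms coprime_prime_right_iff[of 3 r] by (auto simp: coprime_commute dvd_eq_mod_eq_0)
  then consider "r mod 3 = 1" | "r mod 3 = 2"
    by arith
  then show ?thesis
  proof cases
    case 1
    then show ?thesis
      using ord_eq_Suc_0_iff[of 3 r] by (simp add: cong_def)
  next
    case 2
    then have "[r\<^sup>2 = 1] (mod 3)"
      by (simp add: cong_def power_mod[symmetric])
    with 2 show ?thesis
      by (simp add: ord_eq_2_iff cong_def)
  qed
qed

lemma kappa_1: "kappa 1 r t = 1"
  by (simp add: kappa_def)

lemma SS_1_eq_card:
  fixes p r t :: nat
  assumes "prime p" "p \<noteq> 3" "coprime r (3*p)"
  shows "SS p 1 r t = card {j\<in>{0<..ord (3*p) r}. \<not> ord 3 r dvd j \<and> \<not> ord p r dvd j}"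
proof -
  define n where "n = ord (3*p) r"
  have "n > 0"
    using assms(3) by (simp add: n_def coprime_commute)
  have "r > 0"
    using assms by (intro Nat.gr0I) auto
  have prime_3: "prime (3::nat)"
    by simp
  have ord_dvd_n: "ord 3 r dvd n" "ord p r dvd n"
    using assms(1,2) by (simp_all add: n_def ord_modulus_mult_coprime primes_coprime)
  have "Lam p 1 r t = {l. l dvd n \<and> coprime (r ^ l - 1) (3*p)}"
    using \<open>n > 0\<close> unfolding Lam_def kappa_1 coprime_iff_gcd_eq_1 by (auto simp: n_def intro: Nat.gr0I)
  then have "SS p 1 r t = (\<Sum>l | l dvd n \<and> coprime (r ^ l - 1) (3*p). totient (n div l))"
    unfolding SS_def kappa_1 n_def[symmetric] by simp
  also have "\<dots> = card {j\<in>{0<..n}. coprime (r ^ gcd j n - 1) (3*p)}"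
    using \<open>n > 0\<close> by (rule sum_totient_divisors_filter)
  also have "{j\<in>{0<..n}. coprime (r ^ gcd j n - 1) (3*p)} =
             {j\<in>{0<..n}. \<not> ord 3 r dvd j \<and> \<not> ord p r dvd j}"
    unfolding coprime_power_minus_one_prime_product[OF prime_3 assms(1) \<open>r > 0\<close>]
    using ord_dvd_n by (simp add: gcd_greatest_iff)
  finally show ?thesis
    by (simp add: n_def)
qed

theorem lemma5p8:
  fixes p r t :: nat
  assumes "prime p" and "p > 3"
    and "t \<in> {1, 3, p, 3*p}"
    and "1 \<le> r" and "r \<le> 3*p - 1" and "coprime r (3*p)"
  shows "SS p 1 r t =
          (if r mod 3 = 1 then 0
           else if odd (ord p r) then ord p r - 1
           else ord p r div 2)"
proof -
  have ord_3p: "ord (3*p) r = lcm (ord 3 r) (ord p r)"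
    using assms(1,2) by (simp add: ord_modulus_mult_coprime primes_coprime)
  have "coprime 3 r" "ord p r > 0"
    using assms(6) by (auto simp: coprime_commute)
  have SS: "SS p 1 r t = card {j\<in>{0<..lcm (ord 3 r) (ord p r)}. \<not> ord 3 r dvd j \<and> \<not> ord p r dvd j}"
    using SS_1_eq_card[of p r t] assms(1,2,6) ord_3p by simp
  show ?thesis
  proof (cases "r mod 3 = 1")
    case True
    then show ?thesis
      using SS ord_3_eq[OF \<open>coprime 3 r\<close>] by simp
  next
    case False
    then show ?thesis
      using SS ord_3_eq[OF \<open>coprime 3 r\<close>] card_odd_not_multiple_lcm_2[OF \<open>ord p r > 0\<close>] by simp
  qed
qed

end
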